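(* Let $X$ be a pre-ordered Banach space with a closed generating cone. If the dual $X'$, endowed with the dual cone, is a quasi-lattice (a $\upsilon$-quasi-lattice or a $\mu$-quasi-lattice), then there exists $\alpha>0$ such that $X$ is $\alpha$-Ellis-Grosberg-Krein regular.
   Context: A pre-ordered Banach space is a real Banach space $X$ with a cone $X_+$ ($X_++X_+\subseteq X_+$, $\lambda X_+\subseteq X_+$ for $\lambda\ge0$); $x\le y$ means $y-x\in X_+$; generating means $X=X_+-X_+$. The dual cone is $X'_+=\{f\in X': f(X_+)\subseteq[0,\infty)\}$. $X$ is $\alpha$-Ellis-Grosberg-Krein regular if it is $\alpha$-max-normal ($z\le x\le y$ implies $\|x\|\le\alpha\max\{\|y\|,\|z\|\}$) and approximately $\alpha$-sum-conormal (for every $x$ and $\varepsilon>0$ there are $a,b\in X_+$ with $x=a-b$ and $\|a\|+\|b\|<\alpha\|x\|+\varepsilon$). For subsets $A$, $\upsilon(A)$ is the set of upper bounds and $\mu(A)$ the set of minimal upper bounds. With $\sigma_{x,y}(z)=\|z-x\|+\|z-y\|$, a pre-ordered Banach space with closed cone is a $\upsilon$-quasi-lattice (resp. $\mu$-quasi-lattice) if for all $x,y$ the set $\upsilon(\{x,y\})$ (resp. $\mu(\{x,y\})$) is non-empty and contains a unique minimizer of $\sigma_{x,y}$ on it. *)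

theory Defs
  imports "HOL-Analysis.Analysis"
begin

definition is_cone :: "'a::real_vector set \<Rightarrow> bool" where
  "is_cone K \<longleftrightarrow> (\<forall>x\<in>K. \<forall>y\<in>K. x + y \<in> K) \<and> (\<forall>x\<in>K. \<forall>l::real. l \<ge> 0 \<longrightarrow> l *\<^sub>R x \<in> K)"

definition cone_le :: "'a::real_vector set \<Rightarrow> 'a \<Rightarrow> 'a \<Rightarrow> bool" where
  "cone_le K x y \<longleftrightarrow> y - x \<in> K"

definition generating :: "'a::real_vector set \<Rightarrow> bool" where
  "generating K \<longleftrightarrow> (\<forall>x. \<exists>a\<in>K. \<exists>b\<in>K. x = a - b)"

definition dual_cone :: "'a::real_normed_vector set \<Rightarrow> ('a \<Rightarrow>\<^sub>L real) set" where
  "dual_cone K = {f. \<forall>x\<in>K. 0 \<le> blinfun_apply f x}"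

definition max_normal :: "'a::real_normed_vector set \<Rightarrow> real \<Rightarrow> bool" where
  "max_normal K \<alpha> \<longleftrightarrow>
     (\<forall>x y z. cone_le K z x \<and> cone_le K x y \<longrightarrow> norm x \<le> \<alpha> * max (norm y) (norm z))"

definition approx_sum_conormal :: "'a::real_normed_vector set \<Rightarrow> real \<Rightarrow> bool" where
  "approx_sum_conormal K \<alpha> \<longleftrightarrow>
     (\<forall>x. \<forall>\<epsilon>>0. \<exists>a\<in>K. \<exists>b\<in>K. x = a - b \<and> norm a + norm b < \<alpha> * norm x + \<epsilon>)"

definition EGK_regular :: "'a::real_normed_vector set \<Rightarrow> real \<Rightarrow> bool" where
  "EGK_regular K \<alpha> \<longleftrightarrow> max_normal K \<alpha> \<and> approx_sum_conormal K \<alpha>"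

definition upper_bounds :: "'a::real_vector set \<Rightarrow> 'a set \<Rightarrow> 'a set" where
  "upper_bounds K A = {z. \<forall>a\<in>A. cone_le K a z}"

definition minimal_upper_bounds :: "'a::real_vector set \<Rightarrow> 'a set \<Rightarrow> 'a set" where
  "minimal_upper_bounds K A =
     {z \<in> upper_bounds K A. \<forall>w\<in>upper_bounds K A. cone_le K w z \<longrightarrow> cone_le K z w}"

definition sigma_xy :: "'a::real_normed_vector \<Rightarrow> 'a \<Rightarrow> 'a \<Rightarrow> real" where
  "sigma_xy x y z = norm (z - x) + norm (z - y)"

definition unique_minimizer_in :: "('a \<Rightarrow> real) \<Rightarrow> 'a set \<Rightarrow> bool" where
  "unique_minimizer_in f S \<longleftrightarrow> (\<exists>!z. z \<in> S \<and> (\<forall>w\<in>S. f z \<le> f w))"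

definition upsilon_quasi_lattice :: "'a::real_normed_vector set \<Rightarrow> bool" where
  "upsilon_quasi_lattice K \<longleftrightarrow> closed K \<and>
     (\<forall>x y. upper_bounds K {x, y} \<noteq> {} \<and> unique_minimizer_in (sigma_xy x y) (upper_bounds K {x, y}))"

definition mu_quasi_lattice :: "'a::real_normed_vector set \<Rightarrow> bool" where
  "mu_quasi_lattice K \<longleftrightarrow> closed K \<and>
     (\<forall>x y. minimal_upper_bounds K {x, y} \<noteq> {} \<and>
            unique_minimizer_in (sigma_xy x y) (minimal_upper_bounds K {x, y}))"

end

theory Submission
  imports Defs
begin

text \<open>If the dual cone is a quasi-lattice, any two functionals have an upper bound, so the dual
  cone is generating. A closed generating cone in a Banach space is sum-conormal: by Baire category
  some ball around 0 lies in the closure of the differences of bounded positive elements, and a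
  geometric series of corrections turns these approximate decompositions into exact ones. For K
  this gives approximate sum-conormality. For the dual cone it gives max-normality of K: write a
  norming functional for x as f = p - q with p, q positive and of controlled norm; then z \<le> x \<le> y
  yields norm x = p x - q x \<le> p y - q z \<le> (norm p + norm q) max (norm y) (norm z).\<close>

section \<open>Sublinear functionals and norming functionals\<close>

definition sublinear :: "('a::real_vector \<Rightarrow> real) \<Rightarrow> bool" where
  "sublinear q \<longleftrightarrow> (\<forall>u v. q (u + v) \<le> q u + q v) \<and> (\<forall>l\<ge>0. \<forall>v. q (l *\<^sub>R v) = l * q v)"

lemma sublinear_add_le: "sublinear q \<Longrightarrow> q (u + v) \<le> q u + q v"
  unfolding sublinear_def by blast

lemma sublinear_scaleR: "sublinear q \<Longrightarrow> l \<ge> 0 \<Longrightarrow> q (l *\<^sub>R v) = l * q v"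
  unfolding sublinear_def by blast

lemma sublinear_zero: "sublinear q \<Longrightarrow> q 0 = 0"
  using sublinear_scaleR[of q 0 0] by simp

lemma sublinear_minus_ge: "sublinear q \<Longrightarrow> - q (- v) \<le> q v"
  using sublinear_add_le[of q v "- v"] sublinear_zero[of q] by simp

lemma sublinearI:
  fixes q :: "'a::real_vector \<Rightarrow> real"
  assumes add: "\<And>u v. q (u + v) \<le> q u + q v"
    and scale: "\<And>l v. l > 0 \<Longrightarrow> q (l *\<^sub>R v) \<le> l * q v"
    and zero: "q 0 = 0"
  shows "sublinear q"
proof -
  have "q (l *\<^sub>R v) = l * q v" if "l > 0" for l v
  proof -
    have "q v = q ((1/l) *\<^sub>R (l *\<^sub>R v))" using that by simp
    also have "\<dots> \<le> (1/l) * q (l *\<^sub>R v)" using scale[of "1/l" "l *\<^sub>R v"] that by simp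
    finally have "l * q v \<le> q (l *\<^sub>R v)" using that by (simp add: field_simps)
    then show ?thesis using scale[OF that, of v] by simp
  qed
  then show ?thesis unfolding sublinear_def using add zero
    by (metis less_eq_real_def mult_zero_left scale_zero_left)
qed

text \<open>Pushing a sublinear functional down in the direction of a: the result is again sublinear,
  lies below q and takes a value at most - q a at - a. Hence a minimal sublinear functional is
  odd, i.e. linear.\<close>
definition sublinear_shift :: "('a::real_vector \<Rightarrow> real) \<Rightarrow> 'a \<Rightarrow> 'a \<Rightarrow> real" where
  "sublinear_shift q a v = (INF t\<in>{0..}. q (v + t *\<^sub>R a) - t * q a)"

lemma sublinear_shift_bdd_below:
  assumes "sublinear q"
  shows "bdd_below ((\<lambda>t. q (v + t *\<^sub>R a) - t * q a) ` {0..})"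
proof (rule bdd_belowI2[where m = "- q (- v)"])
  fix t :: real assume "t \<in> {0..}"
  then have "t * q a = q ((v + t *\<^sub>R a) + - v)" using sublinear_scaleR[OF assms] by simp
  also have "\<dots> \<le> q (v + t *\<^sub>R a) + q (- v)" by (rule sublinear_add_le[OF assms])
  finally show "- q (- v) \<le> q (v + t *\<^sub>R a) - t * q a" by simp
qed

lemma sublinear_shift_le:
  "sublinear q \<Longrightarrow> t \<ge> 0 \<Longrightarrow> sublinear_shift q a v \<le> q (v + t *\<^sub>R a) - t * q a"
  unfolding sublinear_shift_def by (rule cInf_lower[OF _ sublinear_shift_bdd_below]) auto

lemma sublinear_shift_greatest:
  "(\<And>t. t \<ge> 0 \<Longrightarrow> c \<le> q (v + t *\<^sub>R a) - t * q a) \<Longrightarrow> c \<le> sublinear_shift q a v"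
  unfolding sublinear_shift_def by (rule cInf_greatest) auto

lemma sublinear_shift_le_self: "sublinear q \<Longrightarrow> sublinear_shift q a v \<le> q v"
  using sublinear_shift_le[of q 0 a v] by simp

lemma sublinear_shift_minus: "sublinear q \<Longrightarrow> sublinear_shift q a (- a) \<le> - q a"
  using sublinear_shift_le[of q 1 a "- a"] sublinear_zero[of q] by simp

lemma sublinear_sublinear_shift:
  assumes q: "sublinear q"
  shows "sublinear (sublinear_shift q a)"
proof (rule sublinearI)
  fix u v
  have "sublinear_shift q a (u + v) - (q (u + t *\<^sub>R a) - t * q a) \<le> sublinear_shift q a v"
    if t: "t \<ge> 0" for t
  proof (rule sublinear_shift_greatest)
    fix s :: real assume s: "s \<ge> 0"
    have "sublinear_shift q a (u + v) \<le> q (u + v + (t + s) *\<^sub>R a) - (t + s) * q a"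
      using sublinear_shift_le[OF q, of "t + s"] t s by simp
    also have "q (u + v + (t + s) *\<^sub>R a) = q ((u + t *\<^sub>R a) + (v + s *\<^sub>R a))"
      by (simp add: algebra_simps)
    also have "\<dots> \<le> q (u + t *\<^sub>R a) + q (v + s *\<^sub>R a)" by (rule sublinear_add_le[OF q])
    finally show "sublinear_shift q a (u + v) - (q (u + t *\<^sub>R a) - t * q a)
        \<le> q (v + s *\<^sub>R a) - s * q a"
      by (simp add: algebra_simps)
  qed
  then have "sublinear_shift q a (u + v) - sublinear_shift q a v \<le> sublinear_shift q a u"
    by (intro sublinear_shift_greatest) (simp add: algebra_simps)
  then show "sublinear_shift q a (u + v) \<le> sublinear_shift q a u + sublinear_shift q a v"
    by simp
next
  fix l :: real and v assume l: "l > 0"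
  have "sublinear_shift q a (l *\<^sub>R v) / l \<le> sublinear_shift q a v"
  proof (rule sublinear_shift_greatest)
    fix t :: real assume t: "t \<ge> 0"
    have "sublinear_shift q a (l *\<^sub>R v) \<le> q (l *\<^sub>R v + (l * t) *\<^sub>R a) - (l * t) * q a"
      using sublinear_shift_le[OF q, of "l * t"] t l by simp
    also have "q (l *\<^sub>R v + (l * t) *\<^sub>R a) = l * q (v + t *\<^sub>R a)"
      using sublinear_scaleR[OF q, of l "v + t *\<^sub>R a"] l by (simp add: algebra_simps)
    finally show "sublinear_shift q a (l *\<^sub>R v) / l \<le> q (v + t *\<^sub>R a) - t * q a"
      using l by (simp add: field_simps)
  qed
  then show "sublinear_shift q a (l *\<^sub>R v) \<le> l * sublinear_shift q a v"
    using l by (simp add: field_simps)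
next
  show "sublinear_shift q a 0 = 0"
  proof (rule antisym)
    show "sublinear_shift q a 0 \<le> 0"
      using sublinear_shift_le_self[OF q] sublinear_zero[OF q] by metis
    show "0 \<le> sublinear_shift q a 0"
      by (rule sublinear_shift_greatest) (simp add: sublinear_scaleR[OF q])
  qed
qed

lemma linear_if_sublinear_shift_eq:
  assumes m: "sublinear m" and fixed: "\<And>a. sublinear_shift m a = m"
  shows "linear m"
proof -
  have minus: "m (- a) = - m a" for a
    using sublinear_shift_minus[OF m, of a] sublinear_minus_ge[OF m, of "- a"] fixed[of a] by simp
  show ?thesis
  proof (rule linearI)
    fix u v
    show "m (u + v) = m u + m v"
      using sublinear_add_le[OF m, of u v] sublinear_add_le[OF m, of "- u" "- v"]
        minus[of "u + v"] minus[of u] minus[of v] by (simp add: algebra_simps)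
  next
    fix l :: real and v
    show "m (l *\<^sub>R v) = l *\<^sub>R m v"
    proof (cases "l \<ge> 0")
      case True then show ?thesis using sublinear_scaleR[OF m] by simp
    next
      case False
      have "m (l *\<^sub>R v) = - m ((- l) *\<^sub>R v)" using minus[of "(- l) *\<^sub>R v"] by simp
      also have "\<dots> = l * m v" using sublinear_scaleR[OF m, of "- l" v] False by simp
      finally show ?thesis by simp
    qed
  qed
qed

lemma sublinear_INF_chain:
  assumes C: "C \<noteq> {}" "\<And>q. q \<in> C \<Longrightarrow> sublinear q \<and> q \<le> p"
    and chain: "\<And>q1 q2. q1 \<in> C \<Longrightarrow> q2 \<in> C \<Longrightarrow> q1 \<le> q2 \<or> q2 \<le> q1"
  shows "sublinear (\<lambda>v. INF q\<in>C. q v)" (is "sublinear ?u")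
    and "\<forall>q\<in>C. (\<lambda>v. INF q\<in>C. q v) \<le> q"
proof -
  have bdd: "bdd_below ((\<lambda>q. q v) ` C)" for v
  proof (rule bdd_belowI2[where m = "- p (- v)"])
    fix q assume "q \<in> C"
    then have "sublinear q" "q (- v) \<le> p (- v)" using C(2) by (auto simp: le_fun_def)
    then show "- p (- v) \<le> q v" using sublinear_minus_ge[of q v] by linarith
  qed
  have lower: "?u v \<le> q v" if "q \<in> C" for q v
    by (rule cInf_lower[OF _ bdd]) (use that in auto)
  then show "\<forall>q\<in>C. ?u \<le> q" by (simp add: le_fun_def)
  have greatest: "c \<le> ?u v" if "\<And>q. q \<in> C \<Longrightarrow> c \<le> q v" for c v
    by (rule cInf_greatest) (use C that in auto)
  show "sublinear ?u"
  proof (rule sublinearI)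
    fix u v
    have "?u (u + v) - q1 u \<le> q2 v" if q12: "q1 \<in> C" "q2 \<in> C" for q1 q2
    proof -
      obtain q where q: "q \<in> C" "q \<le> q1" "q \<le> q2"
        using chain[OF q12] q12 by (metis order_refl)
      have "?u (u + v) \<le> q (u + v)" by (rule lower[OF q(1)])
      also have "\<dots> \<le> q u + q v" using C(2)[OF q(1)] sublinear_add_le by blast
      also have "\<dots> \<le> q1 u + q2 v" using le_funD[OF q(2)] le_funD[OF q(3)] by (rule add_mono)
      finally show ?thesis by simp
    qed
    then have "?u (u + v) - q1 u \<le> ?u v" if "q1 \<in> C" for q1
      using that by (intro greatest) blast
    then have "?u (u + v) - ?u v \<le> ?u u"
      by (intro greatest) (simp add: algebra_simps)
    then show "?u (u + v) \<le> ?u u + ?u v" by simp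
  next
    fix l :: real and v assume l: "l > 0"
    have "?u (l *\<^sub>R v) / l \<le> ?u v"
    proof (rule greatest)
      fix q assume q: "q \<in> C"
      have "?u (l *\<^sub>R v) \<le> l * q v"
        using lower[OF q, of "l *\<^sub>R v"] sublinear_scaleR[of q l v] C(2)[OF q] l by simp
      then show "?u (l *\<^sub>R v) / l \<le> q v" using l by (simp add: field_simps)
    qed
    then show "?u (l *\<^sub>R v) \<le> l * ?u v" using l by (simp add: field_simps)
  next
    have "(\<lambda>q. q 0) ` C = {0}" using C sublinear_zero by fastforce
    then show "?u 0 = 0" by simp
  qed
qed

text \<open>Hahn-Banach, via a minimal sublinear functional below p (Zorn's lemma).\<close>
lemma linear_below_sublinear:
  fixes p :: "'a::real_vector \<Rightarrow> real"
  assumes p: "sublinear p"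
  shows "\<exists>m. linear m \<and> m \<le> p"
proof -
  define A where "A = {q. sublinear q \<and> q \<le> p}"
  let ?r = "relation_of (\<lambda>q1 q2. q2 \<le> q1) A"
  have po: "partial_order_on A ?r"
    by (rule partial_order_on_relation_ofI) auto
  have "\<exists>u\<in>A. \<forall>q\<in>C. u \<le> q" if C: "C \<in> Chains ?r" for C
  proof (cases "C = {}")
    case True
    then show ?thesis using p by (auto simp: A_def)
  next
    case False
    have CA: "C \<subseteq> A" by (rule Chains_relation_of[OF C])
    have chain: "q1 \<le> q2 \<or> q2 \<le> q1" if "q1 \<in> C" "q2 \<in> C" for q1 q2
      using C that unfolding Chains_def relation_of_def by blast
    have u: "sublinear (\<lambda>v. INF q\<in>C. q v)" "\<forall>q\<in>C. (\<lambda>v. INF q\<in>C. q v) \<le> q"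
      using sublinear_INF_chain[OF False _ chain] CA by (auto simp: A_def)
    obtain q where "q \<in> C" using False by blast
    then have "(\<lambda>v. INF q\<in>C. q v) \<le> p" using u(2) CA by (force simp: A_def)
    then show ?thesis using u unfolding A_def by blast
  qed
  then obtain m where m: "m \<in> A" and minimal: "\<And>q. q \<in> A \<Longrightarrow> q \<le> m \<Longrightarrow> q = m"
    using predicate_Zorn[OF po] by blast
  have "sublinear m" using m by (simp add: A_def)
  moreover have "sublinear_shift m a = m" for a
  proof (rule minimal)
    have "sublinear_shift m a \<le> m"
      using sublinear_shift_le_self[OF \<open>sublinear m\<close>] by (simp add: le_fun_def)
    then show "sublinear_shift m a \<in> A"
      using sublinear_sublinear_shift[OF \<open>sublinear m\<close>] m by (auto simp: A_def)
    show "sublinear_shift m a \<le> m" by fact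
  qed
  ultimately show ?thesis using linear_if_sublinear_shift_eq m by (auto simp: A_def)
qed

lemma norming_functional_exists:
  fixes x :: "'a::real_normed_vector"
  shows "\<exists>f::'a \<Rightarrow>\<^sub>L real. norm f \<le> 1 \<and> blinfun_apply f x = norm x"
proof -
  have "sublinear (norm :: 'a \<Rightarrow> real)" unfolding sublinear_def by (simp add: norm_triangle_ineq)
  then have p: "sublinear (sublinear_shift norm x)" by (rule sublinear_sublinear_shift)
  obtain m where m: "linear m" "m \<le> sublinear_shift norm x"
    using linear_below_sublinear[OF p] by blast
  have below_norm: "m v \<le> norm v" for v
    using le_funD[OF m(2), of v] sublinear_shift_le_self[OF \<open>sublinear norm\<close>, of x v] by linarith
  have bound: "norm (m v) \<le> norm v * 1" for v
    using below_norm[of v] below_norm[of "- v"] linear_neg[OF m(1), of v] by auto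
  have "bounded_linear m"
    by (rule bounded_linear_intro[OF linear_add[OF m(1)] _ bound]) (simp add: linear_scale[OF m(1)])
  then have f: "blinfun_apply (Blinfun m) = m" by (rule bounded_linear_Blinfun_apply)
  have "- m x \<le> - norm x"
    using le_funD[OF m(2), of "- x"] sublinear_shift_minus[OF \<open>sublinear norm\<close>, of x]
      linear_neg[OF m(1), of x] by linarith
  then have "m x = norm x" using below_norm[of x] by simp
  moreover have "norm (Blinfun m) \<le> 1" by (rule norm_blinfun_bound) (use bound f in auto)
  ultimately show ?thesis using f by metis
qed

section \<open>Bounded decompositions with respect to a closed generating cone\<close>

definition sum_conormal :: "'a::real_normed_vector set \<Rightarrow> real \<Rightarrow> bool" where
  "sum_conormal K \<beta> \<longleftrightarrow> (\<forall>x. \<exists>a\<in>K. \<exists>b\<in>K. x = a - b \<and> norm a + norm b \<le> \<beta> * norm x)"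

lemma sum_conormal_mono: "sum_conormal K \<beta> \<Longrightarrow> \<beta> \<le> \<gamma> \<Longrightarrow> sum_conormal K \<gamma>"
  unfolding sum_conormal_def by (meson mult_right_mono norm_ge_zero order_trans)

lemma zero_in_generating_cone:
  assumes "is_cone K" "generating K"
  shows "0 \<in> K"
proof -
  obtain a where "a \<in> K" using assms(2) unfolding generating_def by blast
  then have "0 *\<^sub>R a \<in> K" using assms(1) unfolding is_cone_def by blast
  then show ?thesis by simp
qed

lemma cone_sum: "is_cone K \<Longrightarrow> 0 \<in> K \<Longrightarrow> (\<And>i. i \<in> I \<Longrightarrow> f i \<in> K) \<Longrightarrow> sum f I \<in> K"
proof (induction I rule: infinite_finite_induct)
  case (insert i I)
  then show ?case unfolding is_cone_def by simp
qed auto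

lemma closed_cone_suminf:
  fixes A :: "nat \<Rightarrow> 'a::banach"
  assumes K: "is_cone K" "closed K" "0 \<in> K"
    and A: "\<And>k. A k \<in> K" "\<And>k. norm (A k) \<le> g k" and g: "summable g"
  shows "suminf A \<in> K" "norm (suminf A) \<le> suminf g"
proof -
  have "summable A" by (rule summable_comparison_test[OF _ g]) (use A(2) in auto)
  then show "suminf A \<in> K"
    by (intro closed_sequentially[OF K(2) _ summable_LIMSEQ]) (simp add: cone_sum[OF K(1,3)] A)
  show "norm (suminf A) \<le> suminf g" by (rule norm_suminf_le[OF A(2) g])
qed

definition bounded_differences :: "'a::real_normed_vector set \<Rightarrow> real \<Rightarrow> 'a set" where
  "bounded_differences K c = {a - b | a b. a \<in> K \<and> b \<in> K \<and> norm a \<le> c \<and> norm b \<le> c}"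

lemma bounded_differences_mono: "c \<le> d \<Longrightarrow> bounded_differences K c \<subseteq> bounded_differences K d"
  unfolding bounded_differences_def by force

lemma closure_bounded_differences_diff:
  assumes "is_cone K" "u \<in> closure (bounded_differences K c)" "v \<in> closure (bounded_differences K c)"
  shows "u - v \<in> closure (bounded_differences K (2 * c))"
  unfolding closure_approachable
proof (intro allI impI)
  fix e :: real assume e: "e > 0"
  obtain u' where u': "u' \<in> bounded_differences K c" "dist u' u < e/2"
    using assms(2) e unfolding closure_approachable by (meson half_gt_zero)
  obtain v' where v': "v' \<in> bounded_differences K c" "dist v' v < e/2"
    using assms(3) e unfolding closure_approachable by (meson half_gt_zero)
  obtain a1 b1 where 1: "u' = a1 - b1" "a1 \<in> K" "b1 \<in> K" "norm a1 \<le> c" "norm b1 \<le> c"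
    using u'(1) unfolding bounded_differences_def by blast
  obtain a2 b2 where 2: "v' = a2 - b2" "a2 \<in> K" "b2 \<in> K" "norm a2 \<le> c" "norm b2 \<le> c"
    using v'(1) unfolding bounded_differences_def by blast
  have "u' - v' = (a1 + b2) - (b1 + a2)" using 1 2 by simp
  moreover have "a1 + b2 \<in> K" "b1 + a2 \<in> K" using 1 2 assms(1) unfolding is_cone_def by auto
  moreover have "norm (a1 + b2) \<le> 2 * c" "norm (b1 + a2) \<le> 2 * c"
    using 1 2 norm_triangle_ineq[of a1 b2] norm_triangle_ineq[of b1 a2] by auto
  ultimately have "u' - v' \<in> bounded_differences K (2 * c)"
    unfolding bounded_differences_def by blast
  moreover have "dist (u' - v') (u - v) < e"
    using u'(2) v'(2) dist_triangle_add[of u' "- v'" u "- v"]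
    by (simp add: dist_norm algebra_simps norm_minus_commute)
  ultimately show "\<exists>y\<in>bounded_differences K (2 * c). dist y (u - v) < e" by blast
qed

text \<open>Baire: the closures of the sets of bounded differences cover the space, so one of them
  contains a ball; subtracting its centre gives a ball around 0.\<close>
lemma ball_subset_closure_bounded_differences:
  fixes K :: "'a::banach set"
  assumes "is_cone K" "generating K"
  shows "\<exists>c>0. \<exists>r>0. ball 0 r \<subseteq> closure (bounded_differences K c)"
proof -
  define G where "G = range (\<lambda>n::nat. closure (bounded_differences K (real n)))"
  have "x \<in> \<Union>G" for x
  proof -
    obtain a b where ab: "a \<in> K" "b \<in> K" "x = a - b"
      using assms(2) unfolding generating_def by blast
    obtain n :: nat where "max (norm a) (norm b) \<le> real n" using real_arch_simple by blast
    then have "x \<in> bounded_differences K (real n)" unfolding bounded_differences_def using ab by auto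
    then show ?thesis unfolding G_def using closure_subset by blast
  qed
  then have "\<Union>G = UNIV" by blast
  have "\<exists>T\<in>G. interior T \<noteq> {}"
  proof (rule ccontr)
    assume "\<not> ?thesis"
    then have "euclidean interior_of \<Union>G = {}"
      by (intro Baire_category_alt)
        (auto simp: completely_metrizable_space_euclidean G_def closed_closedin[symmetric])
    then show False using \<open>\<Union>G = UNIV\<close> by simp
  qed
  then obtain n :: nat and y where "y \<in> interior (closure (bounded_differences K (real n)))"
    unfolding G_def by blast
  then obtain r where r: "r > 0" "ball y r \<subseteq> closure (bounded_differences K (real n))"
    using interior_subset open_contains_ball by (metis open_interior subset_trans)
  have "z \<in> closure (bounded_differences K (2 * real n + 1))" if "z \<in> ball 0 r" for z
  proof -
    have "y + z \<in> closure (bounded_differences K (real n))" "y \<in> closure (bounded_differences K (real n))"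
      using r that by (auto simp: dist_norm)
    from closure_bounded_differences_diff[OF assms(1) this]
    have "z \<in> closure (bounded_differences K (2 * real n))" by simp
    then show ?thesis using closure_mono[OF bounded_differences_mono[of "2 * real n" "2 * real n + 1" K]] by auto
  qed
  then show ?thesis using r(1) by (intro exI[of _ "2 * real n + 1"]) auto
qed

lemma approximate_bounded_decomposition:
  fixes K :: "'a::banach set"
  assumes K: "is_cone K" "generating K"
  shows "\<exists>M>0. \<forall>z e. e > 0 \<longrightarrow> (\<exists>a\<in>K. \<exists>b\<in>K.
    norm a \<le> M * norm z \<and> norm b \<le> M * norm z \<and> norm (z - (a - b)) < e)"
proof -
  obtain c r where c: "c > 0" and r: "r > 0" and ball: "ball 0 r \<subseteq> closure (bounded_differences K c)"
    using ball_subset_closure_bounded_differences[OF K] by blast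
  define M where "M = 2 * c / r"
  have "\<exists>a\<in>K. \<exists>b\<in>K. norm a \<le> M * norm z \<and> norm b \<le> M * norm z \<and> norm (z - (a - b)) < e"
    if e: "e > 0" for z e
  proof (cases "z = 0")
    case True
    then show ?thesis using zero_in_generating_cone[OF K] e by (intro bexI[of _ 0]) auto
  next
    case False
    then have nz: "norm z > 0" by simp
    \<comment> \<open>rescale z into the ball, approximate there, and scale back\<close>
    define s where "s = r / (2 * norm z)"
    have s: "s > 0" using nz r unfolding s_def by simp
    have "norm (s *\<^sub>R z) < r" unfolding s_def using nz r by simp
    then have "s *\<^sub>R z \<in> closure (bounded_differences K c)" using ball by auto
    then obtain w where w: "w \<in> bounded_differences K c" "dist w (s *\<^sub>R z) < e * s"
      unfolding closure_approachable using e s by (meson mult_pos_pos)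
    obtain a b where ab: "w = a - b" "a \<in> K" "b \<in> K" "norm a \<le> c" "norm b \<le> c"
      using w(1) unfolding bounded_differences_def by blast
    have Mz: "c / s = M * norm z" unfolding M_def s_def using nz r by (simp add: field_simps)
    have "(1/s) *\<^sub>R a \<in> K" "(1/s) *\<^sub>R b \<in> K" using K(1) ab s unfolding is_cone_def by auto
    moreover have "norm ((1/s) *\<^sub>R a) \<le> M * norm z" "norm ((1/s) *\<^sub>R b) \<le> M * norm z"
      using ab s Mz by (auto simp: field_simps)
    moreover have "norm (z - ((1/s) *\<^sub>R a - (1/s) *\<^sub>R b)) < e"
    proof -
      have "z - ((1/s) *\<^sub>R a - (1/s) *\<^sub>R b) = (1/s) *\<^sub>R (s *\<^sub>R z - w)"
        unfolding ab(1) using s by (simp add: scaleR_diff_right)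
      then have "norm (z - ((1/s) *\<^sub>R a - (1/s) *\<^sub>R b)) = norm (s *\<^sub>R z - w) / s"
        using s by simp
      also have "\<dots> < e"
        using w(2) s by (simp add: dist_norm norm_minus_commute field_simps)
      finally show ?thesis .
    qed
    ultimately show ?thesis by blast
  qed
  moreover have "M > 0" unfolding M_def using c r by simp
  ultimately show ?thesis by blast
qed

lemma sum_conormal_if_approximate_decomposition:
  fixes K :: "'a::banach set"
  assumes K: "is_cone K" "closed K" "0 \<in> K" and "M \<ge> 0"
    and approx: "\<forall>z e. e > 0 \<longrightarrow> (\<exists>a\<in>K. \<exists>b\<in>K.
      norm a \<le> M * norm z \<and> norm b \<le> M * norm z \<and> norm (z - (a - b)) < e)"
  shows "sum_conormal K (4 * M)"
  unfolding sum_conormal_def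
proof
  fix x
  obtain dA dB where d: "\<And>z e. e > 0 \<Longrightarrow> dA z e \<in> K \<and> dB z e \<in> K \<and>
      norm (dA z e) \<le> M * norm z \<and> norm (dB z e) \<le> M * norm z \<and> norm (z - (dA z e - dB z e)) < e"
    using approx by metis
  show "\<exists>a\<in>K. \<exists>b\<in>K. x = a - b \<and> norm a + norm b \<le> (4 * M) * norm x"
  proof (cases "x = 0")
    case True
    then show ?thesis using K(3) by auto
  next
    case False
    \<comment> \<open>decompose the successive remainders up to an error norm x / 2 ^ (k + 1) and sum up\<close>
    define \<epsilon> where "\<epsilon> k = norm x / 2 ^ Suc k" for k :: nat
    have \<epsilon>: "\<epsilon> k > 0" for k unfolding \<epsilon>_def using False by simp
    define r where "r = rec_nat x (\<lambda>k y. y - (dA y (\<epsilon> k) - dB y (\<epsilon> k)))"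
    define A where "A k = dA (r k) (\<epsilon> k)" for k
    define B where "B k = dB (r k) (\<epsilon> k)" for k
    have r0: "r 0 = x" and rSuc: "r (Suc k) = r k - (A k - B k)" for k
      unfolding r_def A_def B_def by simp_all
    have AB: "A k \<in> K" "B k \<in> K" "norm (A k) \<le> M * norm (r k)" "norm (B k) \<le> M * norm (r k)"
      and r_small: "norm (r (Suc k)) < \<epsilon> k" for k
      using d[OF \<epsilon>[of k], of "r k"] unfolding A_def B_def rSuc by (simp_all add: A_def B_def)
    have r_le: "norm (r k) \<le> norm x * (1/2) ^ k" for k
    proof (cases k)
      case (Suc j)
      then show ?thesis using r_small[of j] unfolding \<epsilon>_def by (simp add: field_simps power_divide)
    qed (simp add: r0)
    define g where "g k = M * norm x * (1/2) ^ k" for k :: nat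
    have g: "summable g" "suminf g = 2 * M * norm x"
      unfolding g_def by (simp_all add: summable_geometric suminf_mult suminf_geometric)
    have Mg: "M * norm (r k) \<le> g k" for k
      using mult_left_mono[OF r_le[of k] \<open>M \<ge> 0\<close>] by (simp add: g_def mult.assoc)
    have Ag: "norm (A k) \<le> g k" and Bg: "norm (B k) \<le> g k" for k
      using AB(3,4)[of k] Mg[of k] by linarith+
    have a: "suminf A \<in> K" "norm (suminf A) \<le> 2 * M * norm x"
      and b: "suminf B \<in> K" "norm (suminf B) \<le> 2 * M * norm x"
      using closed_cone_suminf[OF K AB(1) Ag g(1)] closed_cone_suminf[OF K AB(2) Bg g(1)]
      by (simp_all add: g(2))
    have "r \<longlonglongrightarrow> 0"
      by (rule Lim_null_comparison[of _ "\<lambda>n. norm x * (1/2) ^ n"])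
        (use r_le in \<open>auto intro!: tendsto_mult_right_zero LIMSEQ_power_zero\<close>)
    moreover have "(\<Sum>k<n. A k - B k) = x - r n" for n
      by (induction n) (simp_all add: r0 rSuc)
    ultimately have "(\<lambda>k. A k - B k) sums x"
      unfolding sums_def using tendsto_diff[OF tendsto_const[of x], of r 0] by simp
    moreover have "(\<lambda>k. A k - B k) sums (suminf A - suminf B)"
      using Ag Bg by (intro sums_diff summable_sums summable_comparison_test[OF _ g(1)]) auto
    ultimately have "x = suminf A - suminf B" by (rule sums_unique2)
    then show ?thesis using a b by (intro bexI[of _ "suminf A"] bexI[of _ "suminf B"]) auto
  qed
qed

lemma sum_conormal_if_closed_generating:
  fixes K :: "'a::banach set"
  assumes K: "is_cone K" "closed K" "generating K"
  shows "\<exists>\<beta>>0. sum_conormal K \<beta>"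
proof -
  obtain M where "M > 0" and "\<forall>z e. e > 0 \<longrightarrow> (\<exists>a\<in>K. \<exists>b\<in>K.
      norm a \<le> M * norm z \<and> norm b \<le> M * norm z \<and> norm (z - (a - b)) < e)"
    using approximate_bounded_decomposition[OF K(1,3)] by blast
  then have "sum_conormal K (4 * M)"
    using sum_conormal_if_approximate_decomposition[OF K(1,2) zero_in_generating_cone[OF K(1,3)]]
    by simp
  then show ?thesis using \<open>M > 0\<close> by (intro exI[of _ "4 * M"]) simp
qed

section \<open>Dual cones\<close>

lemma is_cone_dual_cone: "is_cone (dual_cone K)"
  unfolding is_cone_def dual_cone_def by (auto simp: blinfun.add_left blinfun.scaleR_left)

lemma closed_dual_cone: "closed (dual_cone K)"
proof -
  have "dual_cone K = (\<Inter>x\<in>K. {f. 0 \<le> blinfun_apply f x})" unfolding dual_cone_def by auto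
  moreover have "closed {f::'a \<Rightarrow>\<^sub>L real. 0 \<le> blinfun_apply f x}" for x
    by (intro closed_Collect_le continuous_intros)
  ultimately show ?thesis by (simp add: closed_INT)
qed

lemma generating_if_upper_bounds:
  assumes K: "is_cone K" and ub: "\<And>x y. upper_bounds K {x, y} \<noteq> {}"
  shows "generating K"
  unfolding generating_def
proof
  fix x
  obtain h where "h \<in> upper_bounds K {x, - x}" using ub by blast
  then have "h - x \<in> K" "h + x \<in> K" unfolding upper_bounds_def cone_le_def by auto
  then have "(1/2) *\<^sub>R (h + x) \<in> K" "(1/2) *\<^sub>R (h - x) \<in> K" using K unfolding is_cone_def by auto
  moreover have "x = (1/2) *\<^sub>R (h + x) - (1/2) *\<^sub>R (h - x)"
    by (simp add: algebra_simps flip: scaleR_add_left)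
  ultimately show "\<exists>a\<in>K. \<exists>b\<in>K. x = a - b" by blast
qed

lemma approx_sum_conormal_if_sum_conormal: "sum_conormal K \<alpha> \<Longrightarrow> approx_sum_conormal K \<alpha>"
  unfolding sum_conormal_def approx_sum_conormal_def by (meson le_less_trans less_add_same_cancel1)

lemma max_normal_if_sum_conormal_dual_cone:
  assumes D: "sum_conormal (dual_cone K) \<alpha>" and "0 \<le> \<alpha>"
  shows "max_normal K \<alpha>"
  unfolding max_normal_def
proof (intro allI impI)
  fix x y z assume "cone_le K z x \<and> cone_le K x y"
  then have "x - z \<in> K" "y - x \<in> K" unfolding cone_le_def by auto
  obtain f :: "'a \<Rightarrow>\<^sub>L real" where f: "norm f \<le> 1" "blinfun_apply f x = norm x"
    using norming_functional_exists by blast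
  obtain p q where pq: "p \<in> dual_cone K" "q \<in> dual_cone K" "f = p - q"
    and pq_norm: "norm p + norm q \<le> \<alpha> * norm f"
    using D unfolding sum_conormal_def by blast
  let ?m = "max (norm y) (norm z)"
  have "norm x = blinfun_apply p x - blinfun_apply q x"
    using f(2) pq(3) by (simp add: blinfun.diff_left)
  also have "\<dots> \<le> blinfun_apply p y - blinfun_apply q z"
    using pq(1,2) \<open>x - z \<in> K\<close> \<open>y - x \<in> K\<close> unfolding dual_cone_def
    by (force simp: blinfun.diff_right)
  also have "\<dots> \<le> norm p * norm y + norm q * norm z"
    using norm_blinfun[of p y] norm_blinfun[of q z] by simp
  also have "\<dots> \<le> (norm p + norm q) * ?m"
    by (simp add: distrib_right mult_left_mono add_mono)
  also have "\<dots> \<le> \<alpha> * ?m"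
  proof (rule mult_right_mono)
    show "norm p + norm q \<le> \<alpha>" using pq_norm f(1) \<open>0 \<le> \<alpha>\<close> by (smt (verit) mult_left_le)
  qed (simp add: le_max_iff_disj)
  finally show "norm x \<le> \<alpha> * ?m" .
qed

theorem corollary6p5:
  fixes K :: "'a::banach set"
  assumes "is_cone K" and "closed K" and "generating K"
    and "upsilon_quasi_lattice (dual_cone K) \<or> mu_quasi_lattice (dual_cone K)"
  shows "\<exists>\<alpha>>0. EGK_regular K \<alpha>"
proof -
  have "upper_bounds (dual_cone K) {f, g} \<noteq> {}" for f g
    using assms(4) unfolding upsilon_quasi_lattice_def mu_quasi_lattice_def minimal_upper_bounds_def
    by blast
  then have "generating (dual_cone K)"
    by (intro generating_if_upper_bounds is_cone_dual_cone)
  then obtain \<beta> where "\<beta> > 0" "sum_conormal (dual_cone K) \<beta>"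
    using sum_conormal_if_closed_generating is_cone_dual_cone closed_dual_cone by blast
  moreover obtain \<gamma> where "sum_conormal K \<gamma>"
    using sum_conormal_if_closed_generating[OF assms(1-3)] by blast
  ultimately have "sum_conormal (dual_cone K) (max \<beta> \<gamma>)" "sum_conormal K (max \<beta> \<gamma>)" "max \<beta> \<gamma> > 0"
    by (auto intro: sum_conormal_mono)
  then show ?thesis unfolding EGK_regular_def
    by (meson approx_sum_conormal_if_sum_conormal max_normal_if_sum_conormal_dual_cone less_imp_le)
qed

end
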